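(* Let $p,l$ be distinct odd primes, and let $\tilde\Gamma$, $\psi$ and $\Gamma=\psi(\tilde\Gamma)$ be as in the context. Elements $x,y\in\tilde\Gamma$ commute (as quaternions) if and only if their images $\psi(x),\psi(y)\in\Gamma$ commute.
   Context: Let $p,l$ be distinct odd primes. Let $\mathbb H(\mathbb Z)$ be the ring of quaternions $x=x_0+x_1i+x_2j+x_3k$ with $x_0,\dots,x_3\in\mathbb Z$, where $i^2=j^2=k^2=-1$, $ij=-ji=k$; write $\bar x=x_0-x_1i-x_2j-x_3k$ and $|x|^2=x\bar x=x_0^2+x_1^2+x_2^2+x_3^2$. Fix $c_p,d_p\in\mathbb Q_p$ with $c_p^2+d_p^2+1=0$ and $c_l,d_l\in\mathbb Q_l$ with $c_l^2+d_l^2+1=0$. Define $\psi:\mathbb H(\mathbb Z)\setminus\{0\}\to G:=PGL_2(\mathbb Q_p)\times PGL_2(\mathbb Q_l)$ by sending $x$ to the class of the pair $\left(\begin{pmatrix} x_0+x_1c_p+x_3d_p & -x_1d_p+x_2+x_3c_p\\ -x_1d_p-x_2+x_3c_p & x_0-x_1c_p-x_3d_p\end{pmatrix},\begin{pmatrix} x_0+x_1c_l+x_3d_l & -x_1d_l+x_2+x_3c_l\\ -x_1d_l-x_2+x_3c_l & x_0-x_1c_l-x_3d_l\end{pmatrix}\right)$. It is multiplicative. Let $\tilde\Gamma$ be the set of $x\in\mathbb H(\mathbb Z)$ such that $|x|^2=p^rl^s$ for some integers $r,s\ge 0$, and such that $x_0$ is odd and $x_1,x_2,x_3$ are even if $|x|^2\equiv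 1\pmod 4$, while $x_1$ is even and $x_0,x_2,x_3$ are odd if $|x|^2\equiv 3\pmod 4$. Then $\Gamma=\psi(\tilde\Gamma)$ is a torsion-free cocompact lattice in $G$. *)

theory Defs
  imports "HOL-Analysis.Analysis"
begin

text \<open>Integer (Lipschitz) quaternions x0 + x1 i + x2 j + x3 k.\<close>
datatype zquat = ZQ (q0: int) (q1: int) (q2: int) (q3: int)

definition qmul :: "zquat \<Rightarrow> zquat \<Rightarrow> zquat" where
  "qmul x y = ZQ
     (q0 x * q0 y - q1 x * q1 y - q2 x * q2 y - q3 x * q3 y)
     (q0 x * q1 y + q1 x * q0 y + q2 x * q3 y - q3 x * q2 y)
     (q0 x * q2 y - q1 x * q3 y + q2 x * q0 y + q3 x * q1 y)
     (q0 x * q3 y + q1 x * q2 y - q2 x * q1 y + q3 x * q0 y)"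

definition qnorm2 :: "zquat \<Rightarrow> int" where
  "qnorm2 x = (q0 x)^2 + (q1 x)^2 + (q2 x)^2 + (q3 x)^2"

definition Gamma_tilde :: "int \<Rightarrow> int \<Rightarrow> zquat set" where
  "Gamma_tilde p l = {x. (\<exists>r s::nat. qnorm2 x = p ^ r * l ^ s)
      \<and> (qnorm2 x mod 4 = 1 \<longrightarrow> odd (q0 x) \<and> even (q1 x) \<and> even (q2 x) \<and> even (q3 x))
      \<and> (qnorm2 x mod 4 = 3 \<longrightarrow> even (q1 x) \<and> odd (q0 x) \<and> odd (q2 x) \<and> odd (q3 x))}"

definition mat22 :: "'a \<Rightarrow> 'a \<Rightarrow> 'a \<Rightarrow> 'a \<Rightarrow> 'a^2^2" where
  "mat22 a b c d = (\<chi> i j. if i = 1 then (if j = 1 then a else b) else (if j = 1 then c else d))"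

text \<open>The matrix representing x in GL_2(K), given c, d in K with c^2 + d^2 + 1 = 0.\<close>
definition qmat :: "'a::field \<Rightarrow> 'a \<Rightarrow> zquat \<Rightarrow> 'a^2^2" where
  "qmat c d x = mat22
     (of_int (q0 x) + of_int (q1 x) * c + of_int (q3 x) * d)
     (- of_int (q1 x) * d + of_int (q2 x) + of_int (q3 x) * c)
     (- of_int (q1 x) * d - of_int (q2 x) + of_int (q3 x) * c)
     (of_int (q0 x) - of_int (q1 x) * c - of_int (q3 x) * d)"

text \<open>The class of an invertible matrix in PGL_2(K): its nonzero scalar multiples.\<close>
definition pgl_class :: "'a::field^2^2 \<Rightarrow> ('a^2^2) set" where
  "pgl_class A = {(\<chi> i j. t * A $ i $ j) | t. t \<noteq> 0}"

definition pgl_mul :: "('a::field^2^2) set \<Rightarrow> ('a^2^2) set \<Rightarrow> ('a^2^2) set" where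
  "pgl_mul X Y = {A ** B | A B. A \<in> X \<and> B \<in> Y}"

definition G_mul :: "(('a::field^2^2) set \<times> ('b::field^2^2) set)
     \<Rightarrow> (('a^2^2) set \<times> ('b^2^2) set) \<Rightarrow> (('a^2^2) set \<times> ('b^2^2) set)" where
  "G_mul g h = (pgl_mul (fst g) (fst h), pgl_mul (snd g) (snd h))"

definition psi :: "'a::field \<Rightarrow> 'a \<Rightarrow> 'b::field \<Rightarrow> 'b \<Rightarrow> zquat
     \<Rightarrow> (('a^2^2) set \<times> ('b^2^2) set)" where
  "psi cp dp cl dl x = (pgl_class (qmat cp dp x), pgl_class (qmat cl dl x))"

end

theory Submission
  imports Defs
begin

text \<open>
  Since \<psi> is multiplicative, commuting x and y have commuting images, and conversely
  commuting images force the matrices of xy and yx to have the same class in PGL_2(Q_p). The matrix of a quaternion depends linearly and injectively on its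
  coefficients, so then xy = t yx coefficientwise for a scalar t, and comparing norms gives
  t = 1 or t = -1. If xy = -yx, the real part of y times |x|^2 vanishes; but the norm of an
  element of tilde-Gamma is odd, which forces its real part to be odd.
\<close>

lemma mat22_eq_iff: "mat22 a b c d = mat22 a' b' c' d' \<longleftrightarrow> a = a' \<and> b = b' \<and> c = c' \<and> d = d'"
  unfolding mat22_def vec_eq_iff forall_2 by auto

lemma mat22_mult: "mat22 a b c d ** mat22 a' b' c' d' =
   mat22 (a*a' + b*c') (a*b' + b*d') (c*a' + d*c') (c*b' + d*d')"
  unfolding mat22_def matrix_matrix_mult_def vec_eq_iff forall_2 by (simp add: sum_2)

lemma mat22_scale: "(\<chi> i j. t * mat22 a b c d $ i $ j) = mat22 (t*a) (t*b) (t*c) (t*d)"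
  unfolding mat22_def vec_eq_iff forall_2 by auto

lemma qmat_qmul:
  fixes c d :: "'a::field"
  assumes "c^2 + d^2 + 1 = 0"
  shows "qmat c d (qmul x y) = qmat c d x ** qmat c d y"
  unfolding qmat_def mat22_mult mat22_eq_iff qmul_def zquat.sel of_int_add of_int_mult of_int_diff
  using assms by (intro conjI; algebra)

lemma qmat_eq_scaleD:
  fixes c d t :: "'a::field_char_0"
  assumes cd: "c^2 + d^2 + 1 = 0"
    and eq: "qmat c d x = (\<chi> i j. t * qmat c d y $ i $ j)"
  shows "of_int (q0 x) = t * of_int (q0 y)" "of_int (q1 x) = t * of_int (q1 y)"
    "of_int (q2 x) = t * of_int (q2 y)" "of_int (q3 x) = t * of_int (q3 y)"
proof -
  let ?x0 = "of_int (q0 x) :: 'a" and ?x1 = "of_int (q1 x) :: 'a"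
    and ?x2 = "of_int (q2 x) :: 'a" and ?x3 = "of_int (q3 x) :: 'a"
  let ?y0 = "of_int (q0 y) :: 'a" and ?y1 = "of_int (q1 y) :: 'a"
    and ?y2 = "of_int (q2 y) :: 'a" and ?y3 = "of_int (q3 y) :: 'a"
  have e1: "?x0 + ?x1 * c + ?x3 * d = t * (?y0 + ?y1 * c + ?y3 * d)"
    and e2: "- ?x1 * d + ?x2 + ?x3 * c = t * (- ?y1 * d + ?y2 + ?y3 * c)"
    and e3: "- ?x1 * d - ?x2 + ?x3 * c = t * (- ?y1 * d - ?y2 + ?y3 * c)"
    and e4: "?x0 - ?x1 * c - ?x3 * d = t * (?y0 - ?y1 * c - ?y3 * d)"
    using eq unfolding qmat_def mat22_scale mat22_eq_iff by simp_all
  have "2 * (?x0 - t * ?y0) = 0" using e1 e4 by algebra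
  moreover have "2 * (?x2 - t * ?y2) = 0" using e2 e3 by algebra
  moreover have "2 * (?x1 - t * ?y1) = 0" using cd e1 e2 e3 e4 by algebra
  moreover have "2 * (?x3 - t * ?y3) = 0" using cd e1 e2 e3 e4 by algebra
  ultimately show "?x0 = t * ?y0" "?x1 = t * ?y1" "?x2 = t * ?y2" "?x3 = t * ?y3"
    by simp_all
qed

lemma scaled_matrix_mult:
  "(\<chi> i j. t * (A::'a::field^2^2) $ i $ j) ** (\<chi> i j. s * B $ i $ j)
   = (\<chi> i j. (t * s) * (A ** B) $ i $ j)"
  unfolding matrix_matrix_mult_def vec_eq_iff by (simp add: sum_distrib_left algebra_simps)

lemma self_in_pgl_class: "A \<in> pgl_class A"
  unfolding pgl_class_def by (rule CollectI, rule exI[of _ 1]) simp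

lemma pgl_mul_pgl_class: "pgl_mul (pgl_class A) (pgl_class (B::'a::field^2^2)) = pgl_class (A ** B)"
proof
  show "pgl_mul (pgl_class A) (pgl_class B) \<subseteq> pgl_class (A ** B)"
    unfolding pgl_mul_def pgl_class_def by (auto simp: scaled_matrix_mult)
  show "pgl_class (A ** B) \<subseteq> pgl_mul (pgl_class A) (pgl_class B)"
  proof
    fix M assume "M \<in> pgl_class (A ** B)"
    then obtain u where u: "u \<noteq> 0" "M = (\<chi> i j. u * (A ** B) $ i $ j)"
      unfolding pgl_class_def by blast
    then have "M = (\<chi> i j. u * A $ i $ j) ** B" "(\<chi> i j. u * A $ i $ j) \<in> pgl_class A"
      using scaled_matrix_mult[of u A 1 B] unfolding pgl_class_def by auto
    then show "M \<in> pgl_mul (pgl_class A) (pgl_class B)"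
      unfolding pgl_mul_def using self_in_pgl_class by blast
  qed
qed

lemma pgl_class_eqD:
  "pgl_class A = pgl_class (B::'a::field^2^2) \<Longrightarrow> \<exists>t. A = (\<chi> i j. t * B $ i $ j)"
  using self_in_pgl_class[of A] unfolding pgl_class_def by auto

lemma G_mul_psi:
  assumes "cp^2 + dp^2 + 1 = 0" "cl^2 + dl^2 + 1 = 0"
  shows "G_mul (psi cp dp cl dl x) (psi cp dp cl dl y) = psi cp dp cl dl (qmul x y)"
  unfolding G_mul_def psi_def using assms by (simp add: pgl_mul_pgl_class qmat_qmul)

lemma qnorm2_qmul: "qnorm2 (qmul x y) = qnorm2 x * qnorm2 y"
  unfolding qnorm2_def qmul_def zquat.sel by algebra

text \<open>Anticommuting forces q0 y = 0 unless x = 0, because the real part of xy + yx is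
  2 (x0 y0 - v.w) and its vector part is 2 (x0 w + y0 v), for x = x0 + v, y = y0 + w.\<close>
lemma qmul_anticommute_q0:
  assumes "q0 (qmul x y) = - q0 (qmul y x)" "q1 (qmul x y) = - q1 (qmul y x)"
    "q2 (qmul x y) = - q2 (qmul y x)" "q3 (qmul x y) = - q3 (qmul y x)"
  shows "q0 y * qnorm2 x = 0"
proof -
  have "2 * (q0 y * qnorm2 x) = 0"
    using assms unfolding qmul_def qnorm2_def zquat.sel by algebra
  then show ?thesis by simp
qed

lemma qmul_commute_if_proportional:
  fixes t :: "'a::field_char_0"
  assumes x: "qnorm2 x \<noteq> 0" and y: "q0 y \<noteq> 0"
    and prop0: "of_int (q0 (qmul x y)) = t * of_int (q0 (qmul y x))"
    and prop1: "of_int (q1 (qmul x y)) = t * of_int (q1 (qmul y x))"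
    and prop2: "of_int (q2 (qmul x y)) = t * of_int (q2 (qmul y x))"
    and prop3: "of_int (q3 (qmul x y)) = t * of_int (q3 (qmul y x))"
  shows "qmul x y = qmul y x"
proof -
  have "of_int (qnorm2 (qmul x y)) = t^2 * (of_int (qnorm2 (qmul y x)) :: 'a)"
    unfolding qnorm2_def using prop0 prop1 prop2 prop3
    by (simp add: power_mult_distrib algebra_simps)
  moreover have "qnorm2 y \<noteq> 0"
    using y unfolding qnorm2_def by (smt (verit) zero_le_power2 zero_less_power2)
  then have "qnorm2 (qmul x y) = qnorm2 (qmul y x)" "qnorm2 (qmul y x) \<noteq> 0"
    using x by (simp_all add: qnorm2_qmul)
  ultimately have "t^2 = 1" by simp
  then consider "t = 1" | "t = -1" by (auto simp: power2_eq_1_iff)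
  then show ?thesis
  proof cases
    case 1
    then show ?thesis using prop0 prop1 prop2 prop3 by (simp add: zquat.expand)
  next
    case 2
    then have "q0 y * qnorm2 x = 0"
      using prop0 prop1 prop2 prop3
      by (intro qmul_anticommute_q0) (simp_all flip: of_int_minus)
    with x y show ?thesis by simp
  qed
qed

lemma Gamma_tilde_odd_qnorm2:
  assumes "odd p" "odd l" "x \<in> Gamma_tilde p l"
  shows "odd (qnorm2 x)"
  using assms unfolding Gamma_tilde_def by auto

lemma Gamma_tilde_odd_q0:
  assumes "odd p" "odd l" "x \<in> Gamma_tilde p l"
  shows "odd (q0 x)"
proof -
  have "odd (qnorm2 x)" using Gamma_tilde_odd_qnorm2[OF assms] .
  then have "qnorm2 x mod 4 = 1 \<or> qnorm2 x mod 4 = 3" by presburger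
  then show ?thesis using assms(3) unfolding Gamma_tilde_def by auto
qed

theorem lemma2p1:
  fixes p l :: int
    and cp dp :: "'a::field_char_0"
    and cl dl :: "'b::field_char_0"
  assumes "prime p" "prime l" "odd p" "odd l" "p \<noteq> l"
    and "cp^2 + dp^2 + 1 = 0"
    and "cl^2 + dl^2 + 1 = 0"
    and "x \<in> Gamma_tilde p l" "y \<in> Gamma_tilde p l"
  shows "qmul x y = qmul y x \<longleftrightarrow>
    G_mul (psi cp dp cl dl x) (psi cp dp cl dl y) = G_mul (psi cp dp cl dl y) (psi cp dp cl dl x)"
proof
  assume "G_mul (psi cp dp cl dl x) (psi cp dp cl dl y) = G_mul (psi cp dp cl dl y) (psi cp dp cl dl x)"
  then have "psi cp dp cl dl (qmul x y) = psi cp dp cl dl (qmul y x)"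
    by (simp only: G_mul_psi assms(6,7))
  then have "pgl_class (qmat cp dp (qmul x y)) = pgl_class (qmat cp dp (qmul y x))"
    by (simp add: psi_def)
  then obtain t where "qmat cp dp (qmul x y) = (\<chi> i j. t * qmat cp dp (qmul y x) $ i $ j)"
    using pgl_class_eqD by blast
  note proportional = qmat_eq_scaleD[OF assms(6) this]
  have "qnorm2 x \<noteq> 0" using Gamma_tilde_odd_qnorm2[OF assms(3,4,8)] by auto
  moreover have "q0 y \<noteq> 0" using Gamma_tilde_odd_q0[OF assms(3,4,9)] by auto
  ultimately show "qmul x y = qmul y x"
    using proportional by (rule qmul_commute_if_proportional)
qed (simp add: G_mul_psi assms(6,7))

end
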